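(* If the knowledge connectivity graph belongs to $\mathcal{G}_{di}$, then the Sink algorithm executed by any correct process eventually terminates.
   Context: System: finite set $\Pi$ of processes, partially synchronous (unknown GST after which messages between correct processes arrive within $\delta$), Byzantine set $F$ with $|F|\le f$, correct set $C=\Pi\setminus F$, reliable authenticated channels, unforgeable signatures ($\langle m\rangle_i$ = $m$ signed by $i$). Each process $i$ has a participant detector $PD_i\subseteq\Pi$ and knows $f$; it may only message processes it currently knows. The knowledge connectivity graph is $G_{di}=(\Pi,\{(i,j):j\in PD_i\})$. $\kappa(H)$ denotes the largest $k$ such that every ordered pair of distinct vertices of digraph $H$ is joined by $k$ node-disjoint paths. A digraph belongs to $k$-OSR PD if its underlying undirected graph is connected, its condensation has exactly one sink component, that sink is $k$-strongly connected, and every vertex outside it has $k$ node-disjoint paths to every vertex in it. $G_{safe}=G_{di}[\Pi\setminus F]$. $\mathcal{G}_{di}$: graphs whose $G_{safe}$ is in $(f+1)$-OSR PD with safe sink of size $\ge 2f+1$. Discovery algorithm at $i$: sets $\mathcal{S}_{PD}=\{\langle i,PD_i\rangle_i\}$, $\mathcal{S}_{known}=PD_i\cup\{i\}$, $\mathcal{S}_{received}=\{i\}$; periodically send $\textsc{GetPDs}$ to all of $\mathcal{S}_{known}$; answer $\textsc{GetPDs}$ from $j$ with $\langle\textsc{SetPDs},\mathcal{S}_{PD}\rangle$; on $\langle\textsc{SetPDs},pds_j\rangle$ from $j$ containing a valid $\langle j,PD_j\rangle_j$, merge $pds_j$ into $\mathcal{S}_{PD}$, add all processes listed in the signed PDs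 to $\mathcal{S}_{known}$, and add all signers of those PDs to $\mathcal{S}_{received}$. Sink algorithm at $i$: start Discovery concurrently; wait until there is $R\subseteq\mathcal{S}_{received}$ such that, in the graph built from the PDs in $\mathcal{S}_{PD}$, $\kappa(R)\ge f+1$ and for every $K\subseteq(\mathcal{S}_{known}\cup\mathcal{S}_{received})\setminus R$, if there are more than $f$ node-disjoint paths from $R$ to $K$ then $|K|\le f$; then return $K\cup R$ if some $K\subseteq(\mathcal{S}_{known}\cup\mathcal{S}_{received})\setminus R$ receives more than $f$ node-disjoint paths from $R$, and return $R$ otherwise. *)

theory Defs
  imports Main
begin

text \<open>A digraph is given by an edge relation E; subgraphs are induced by a vertex set V.
  A path is a nonempty list of pairwise distinct vertices with consecutive vertices joined by edges.\<close>

definition is_path :: "('p \<times> 'p) set \<Rightarrow> 'p list \<Rightarrow> bool" where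
  "is_path E p \<longleftrightarrow> p \<noteq> [] \<and> distinct p \<and> successively (\<lambda>x y. (x, y) \<in> E) p"

definition disjoint_paths :: "('p \<times> 'p) set \<Rightarrow> 'p set \<Rightarrow> nat \<Rightarrow> 'p \<Rightarrow> 'p \<Rightarrow> bool" where
  "disjoint_paths E V k u v \<longleftrightarrow>
     (\<exists>P. finite P \<and> k \<le> card P \<and>
          (\<forall>p\<in>P. is_path E p \<and> set p \<subseteq> V \<and> hd p = u \<and> last p = v) \<and>
          (\<forall>p\<in>P. \<forall>q\<in>P. p \<noteq> q \<longrightarrow> set p \<inter> set q \<subseteq> {u, v}))"

text \<open>kappa(G[V]) >= k, i.e. G[V] is k-strongly connected.  Convention (as for complete
  graphs, kappa(K_n) = n-1): a graph with at most k vertices is not k-strongly connected.\<close>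
definition kappa_ge :: "('p \<times> 'p) set \<Rightarrow> 'p set \<Rightarrow> nat \<Rightarrow> bool" where
  "kappa_ge E V k \<longleftrightarrow> finite V \<and> k < card V \<and>
     (\<forall>u\<in>V. \<forall>v\<in>V. u \<noteq> v \<longrightarrow> disjoint_paths E V k u v)"

definition reach :: "('p \<times> 'p) set \<Rightarrow> 'p set \<Rightarrow> ('p \<times> 'p) set" where
  "reach E V = (E \<inter> V \<times> V)\<^sup>*"

definition is_scc :: "('p \<times> 'p) set \<Rightarrow> 'p set \<Rightarrow> 'p set \<Rightarrow> bool" where
  "is_scc E V S \<longleftrightarrow> S \<noteq> {} \<and> S \<subseteq> V \<and>
     (\<forall>u\<in>S. \<forall>v\<in>S. (u, v) \<in> reach E V) \<and>
     (\<forall>u\<in>S. \<forall>v\<in>V. (u, v) \<in> reach E V \<and> (v, u) \<in> reach E V \<longrightarrow> v \<in> S)"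

definition is_sink_comp :: "('p \<times> 'p) set \<Rightarrow> 'p set \<Rightarrow> 'p set \<Rightarrow> bool" where
  "is_sink_comp E V S \<longleftrightarrow> is_scc E V S \<and> (\<forall>u\<in>S. \<forall>v\<in>V. (u, v) \<in> E \<longrightarrow> v \<in> S)"

definition undirected_connected :: "('p \<times> 'p) set \<Rightarrow> 'p set \<Rightarrow> bool" where
  "undirected_connected E V \<longleftrightarrow> (\<forall>u\<in>V. \<forall>v\<in>V. (u, v) \<in> reach (E \<union> E\<inverse>) V)"

definition OSR_with_sink :: "nat \<Rightarrow> ('p \<times> 'p) set \<Rightarrow> 'p set \<Rightarrow> 'p set \<Rightarrow> bool" where
  "OSR_with_sink k E V S \<longleftrightarrow>
     undirected_connected E V \<and>
     (\<forall>S'. is_sink_comp E V S' \<longleftrightarrow> S' = S) \<and>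
     kappa_ge E S k \<and>
     (\<forall>u\<in>V - S. \<forall>v\<in>S. disjoint_paths E V k u v)"

definition in_OSR :: "nat \<Rightarrow> ('p \<times> 'p) set \<Rightarrow> 'p set \<Rightarrow> bool" where
  "in_OSR k E V \<longleftrightarrow> (\<exists>S. OSR_with_sink k E V S)"

definition Gdi_edges :: "('p \<Rightarrow> 'p set) \<Rightarrow> ('p \<times> 'p) set" where
  "Gdi_edges PD = {(i, j). j \<in> PD i}"

definition in_Gdi_class :: "('p \<Rightarrow> 'p set) \<Rightarrow> 'p set \<Rightarrow> nat \<Rightarrow> bool" where
  "in_Gdi_class PD C f \<longleftrightarrow>
     (\<exists>S. OSR_with_sink (Suc f) (Gdi_edges PD) C S \<and> 2 * f + 1 \<le> card S)"

text \<open>A signed participant detector <j, X>_j is represented by the pair (j, X).\<close>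
type_synonym 'p spd = "('p \<times> 'p set) set"

datatype 'p msg = GetPDs | SetPDs "'p spd"

text \<open>Valid SetPDs messages delivered to i at time t: sender j and payload containing an
  entry signed by j.\<close>
definition valid_in :: "(nat \<Rightarrow> ('p \<times> 'p \<times> 'p msg) set) \<Rightarrow> nat \<Rightarrow> 'p \<Rightarrow> ('p \<times> 'p spd) set" where
  "valid_in dlv t i = {(j, pds). (j, i, SetPDs pds) \<in> dlv t \<and> (\<exists>X. (j, X) \<in> pds)}"

text \<open>An execution in which all correct processes (C = UNIV - F) run Discovery (and Sink).
  sent t / dlv t: messages (source, destination, payload) sent / delivered at time t.
  spd, known, rcvd: the local sets S_PD, S_known, S_received of each process at time t
  (constrained only for correct processes).\<close>
definition discovery_run ::
  "('p \<Rightarrow> 'p set) \<Rightarrow> 'p set \<Rightarrow>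
   (nat \<Rightarrow> 'p \<Rightarrow> 'p spd) \<Rightarrow> (nat \<Rightarrow> 'p \<Rightarrow> 'p set) \<Rightarrow> (nat \<Rightarrow> 'p \<Rightarrow> 'p set) \<Rightarrow>
   (nat \<Rightarrow> ('p \<times> 'p \<times> 'p msg) set) \<Rightarrow> (nat \<Rightarrow> ('p \<times> 'p \<times> 'p msg) set) \<Rightarrow> bool" where
  "discovery_run PD F spd known rcvd sent dlv \<longleftrightarrow>
    (let C = - F in
     \<comment> \<open>initialisation\<close>
     (\<forall>i\<in>C. spd 0 i = {(i, PD i)} \<and> known 0 i = PD i \<union> {i} \<and> rcvd 0 i = {i}) \<and>
     \<comment> \<open>handling of valid SetPDs messages: merge S_PD, update S_known and S_received\<close>
     (\<forall>i\<in>C. \<forall>t.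
        spd (Suc t) i = spd t i \<union> (\<Union>(j, pds)\<in>valid_in dlv t i. pds) \<and>
        known (Suc t) i = known t i \<union> (\<Union>(j, pds)\<in>valid_in dlv t i. \<Union>(k, X)\<in>pds. X) \<and>
        rcvd (Suc t) i = rcvd t i \<union> (\<Union>(j, pds)\<in>valid_in dlv t i. fst ` pds)) \<and>
     \<comment> \<open>periodically send GetPDs to every known process\<close>
     (\<forall>i\<in>C. \<forall>t. \<forall>j\<in>known t i. \<exists>t'\<ge>t. (i, j, GetPDs) \<in> sent t') \<and>
     \<comment> \<open>answer every GetPDs with the current S_PD\<close>
     (\<forall>i\<in>C. \<forall>t j. (j, i, GetPDs) \<in> dlv t \<longrightarrow> (\<exists>t'\<ge>t. (i, j, SetPDs (spd t' i)) \<in> sent t')) \<and>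
     \<comment> \<open>correct processes send nothing else\<close>
     (\<forall>i\<in>C. \<forall>t j m. (i, j, m) \<in> sent t \<longrightarrow>
        (m = GetPDs \<and> j \<in> known t i) \<or>
        (m = SetPDs (spd t i) \<and> (\<exists>t'\<le>t. (j, i, GetPDs) \<in> dlv t'))) \<and>
     \<comment> \<open>authenticated channels: messages delivered from a correct source were sent by it\<close>
     (\<forall>i\<in>C. \<forall>t j m. (i, j, m) \<in> dlv t \<longrightarrow> (\<exists>t'\<le>t. (i, j, m) \<in> sent t')) \<and>
     \<comment> \<open>unforgeable signatures: Byzantine processes cannot forge the PD of a correct process\<close>
     (\<forall>b\<in>F. \<forall>i\<in>C. \<forall>t pds k X. (b, i, SetPDs pds) \<in> dlv t \<longrightarrow> (k, X) \<in> pds \<longrightarrow> k \<in> C \<longrightarrow>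
        X = PD k) \<and>
     \<comment> \<open>partial synchrony (includes reliability): there are GST and delta such that every
         message sent at t between correct processes is delivered by max t GST + delta\<close>
     (\<exists>GST \<delta>. \<forall>t i j m. i \<in> C \<longrightarrow> j \<in> C \<longrightarrow> (i, j, m) \<in> sent t \<longrightarrow>
        (\<exists>t'. t \<le> t' \<and> t' \<le> max t GST + \<delta> \<and> (i, j, m) \<in> dlv t')))"

definition pd_graph :: "'p spd \<Rightarrow> ('p \<times> 'p) set" where
  "pd_graph pds = {(j, k). \<exists>X. (j, X) \<in> pds \<and> k \<in> X}"

text \<open>K receives more than f (i.e. at least k = f+1) node-disjoint paths from R:
  every vertex v of K is the end of k paths starting in R that pairwise share only v.\<close>
definition receives_paths :: "('p \<times> 'p) set \<Rightarrow> 'p set \<Rightarrow> 'p set \<Rightarrow> nat \<Rightarrow> bool" where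
  "receives_paths E R K k \<longleftrightarrow>
     (\<forall>v\<in>K. \<exists>P. finite P \<and> k \<le> card P \<and>
        (\<forall>p\<in>P. is_path E p \<and> hd p \<in> R \<and> last p = v) \<and>
        (\<forall>p\<in>P. \<forall>q\<in>P. p \<noteq> q \<longrightarrow> set p \<inter> set q \<subseteq> {v}))"

definition sink_wait_cond :: "nat \<Rightarrow> 'p spd \<Rightarrow> 'p set \<Rightarrow> 'p set \<Rightarrow> bool" where
  "sink_wait_cond f pds kn rc \<longleftrightarrow>
     (\<exists>R \<subseteq> rc. kappa_ge (pd_graph pds) R (Suc f) \<and>
        (\<forall>K \<subseteq> (kn \<union> rc) - R. receives_paths (pd_graph pds) R K (Suc f) \<longrightarrow> card K \<le> f))"

end

theory Submission
  imports Defs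
begin

text \<open>
  Let S be the safe sink. Every correct process reaches every member of S by correct edges,
  and along each correct edge u \<rightarrow> w the GetPDs/SetPDs exchange eventually copies the view
  of w into the view of u. Hence a correct process i eventually holds the signed PDs of all
  of S, and then R = S satisfies the waiting condition: S is (f+1)-strongly connected already
  in the graph of i's view, and since signatures of correct processes cannot be forged,
  the only edges leaving S in that graph lead to Byzantine processes. So every path from S
  to a correct vertex outside S passes through F, and at most |F| \<le> f node-disjoint paths
  can reach any such vertex; a set K receiving f+1 disjoint paths from S thus lies in F.
\<close>

lemma path_in_reach:
  assumes "is_path E p" "set p \<subseteq> V"
  shows "(hd p, last p) \<in> reach E V"
proof -
  have "successively (\<lambda>x y. (x, y) \<in> E) p" "p \<noteq> []"
    using assms(1) unfolding is_path_def by auto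
  then show ?thesis using assms(2) unfolding reach_def
  proof (induction p rule: induct_list012)
    case (3 x y xs)
    then have "(y, last (y # xs)) \<in> (E \<inter> V \<times> V)\<^sup>*" by auto
    moreover have "(x, y) \<in> E \<inter> V \<times> V" using 3 by auto
    ultimately show ?case by (auto intro: converse_rtrancl_into_rtrancl)
  qed auto
qed

lemma disjoint_paths_imp_reach:
  assumes "disjoint_paths E V (Suc k) u v"
  shows "(u, v) \<in> reach E V"
proof -
  obtain P where "Suc k \<le> card P"
    and P: "\<forall>p\<in>P. is_path E p \<and> set p \<subseteq> V \<and> hd p = u \<and> last p = v"
    using assms unfolding disjoint_paths_def by blast
  then have "P \<noteq> {}" by auto
  then obtain p where "p \<in> P" by blast
  then show ?thesis using P path_in_reach[of E p V] by simp
qed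

lemma disjoint_paths_mono:
  assumes "disjoint_paths E V k u v" "E \<inter> V \<times> V \<subseteq> E'"
  shows "disjoint_paths E' V k u v"
proof -
  obtain P where P: "finite P" "k \<le> card P"
    "\<forall>p\<in>P. is_path E p \<and> set p \<subseteq> V \<and> hd p = u \<and> last p = v"
    "\<forall>p\<in>P. \<forall>q\<in>P. p \<noteq> q \<longrightarrow> set p \<inter> set q \<subseteq> {u, v}"
    using assms(1) unfolding disjoint_paths_def by blast
  have "is_path E' p" if "p \<in> P" for p
  proof -
    have "is_path E p" "set p \<subseteq> V" using P(3) that by auto
    moreover have "successively (\<lambda>x y. (x, y) \<in> E') p"
      by (rule successively_mono[of "\<lambda>x y. (x, y) \<in> E"])
        (use calculation assms(2) in \<open>auto simp: is_path_def\<close>)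
    ultimately show ?thesis unfolding is_path_def by blast
  qed
  then show ?thesis unfolding disjoint_paths_def using P by blast
qed

lemma kappa_ge_mono:
  assumes "kappa_ge E V k" "E \<inter> V \<times> V \<subseteq> E'"
  shows "kappa_ge E' V k"
  using assms(1) disjoint_paths_mono[OF _ assms(2)] unfolding kappa_ge_def by blast

lemma reach_sink_of_OSR:
  assumes "OSR_with_sink (Suc k) E V S" "u \<in> V" "s \<in> S"
  shows "(u, s) \<in> reach E V"
proof (cases "u \<in> S")
  case True
  have "is_sink_comp E V S" using assms(1) unfolding OSR_with_sink_def by blast
  then show ?thesis using True assms(3) unfolding is_sink_comp_def is_scc_def by blast
next
  case False
  then have "disjoint_paths E V (Suc k) u s"
    using assms unfolding OSR_with_sink_def by blast
  then show ?thesis by (rule disjoint_paths_imp_reach)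
qed

lemma path_leaving_closed_set_meets:
  assumes "successively (\<lambda>x y. (x, y) \<in> E) p" "p \<noteq> []" "hd p \<in> S" "last p \<notin> S"
    and "\<forall>a\<in>S. \<forall>b. (a, b) \<in> E \<longrightarrow> b \<in> S \<union> F"
  shows "set p \<inter> F \<noteq> {}"
  using assms by (induction p rule: induct_list012) auto

lemma card_paths_le_card_blocking_set:
  assumes "finite F" "v \<notin> F"
    and meets: "\<forall>p\<in>P. set p \<inter> F \<noteq> {}"
    and disj: "\<forall>p\<in>P. \<forall>q\<in>P. p \<noteq> q \<longrightarrow> set p \<inter> set q \<subseteq> {v}"
  shows "card P \<le> card F"
proof -
  define g where "g p = (SOME b. b \<in> set p \<inter> F)" for p
  have g: "g p \<in> set p \<inter> F" if "p \<in> P" for p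
    unfolding g_def by (rule someI_ex) (use meets that in blast)
  have "inj_on g P"
  proof (rule inj_onI)
    fix p q assume "p \<in> P" "q \<in> P" "g p = g q"
    have "g p \<in> set p \<inter> set q" using g[OF \<open>p \<in> P\<close>] g[OF \<open>q \<in> P\<close>] \<open>g p = g q\<close> by simp
    moreover have "g p \<noteq> v" using g[OF \<open>p \<in> P\<close>] \<open>v \<notin> F\<close> by blast
    ultimately show "p = q" using disj \<open>p \<in> P\<close> \<open>q \<in> P\<close> by blast
  qed
  moreover have "g ` P \<subseteq> F" using g by blast
  ultimately show ?thesis using \<open>finite F\<close> by (rule card_inj_on_le)
qed

lemma receives_paths_from_closed_set_subset:
  assumes "receives_paths E S K k" "K \<inter> S = {}" "finite F" "card F < k"
    and "\<forall>a\<in>S. \<forall>b. (a, b) \<in> E \<longrightarrow> b \<in> S \<union> F"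
  shows "K \<subseteq> F"
proof (rule subsetI, rule ccontr)
  fix v assume "v \<in> K" "v \<notin> F"
  then obtain P where P: "finite P" "k \<le> card P"
    "\<forall>p\<in>P. is_path E p \<and> hd p \<in> S \<and> last p = v"
    "\<forall>p\<in>P. \<forall>q\<in>P. p \<noteq> q \<longrightarrow> set p \<inter> set q \<subseteq> {v}"
    using assms(1) unfolding receives_paths_def by blast
  have "\<forall>p\<in>P. set p \<inter> F \<noteq> {}"
  proof
    fix p assume "p \<in> P"
    show "set p \<inter> F \<noteq> {}"
    proof (rule path_leaving_closed_set_meets[OF _ _ _ _ assms(5)])
      show "successively (\<lambda>x y. (x, y) \<in> E) p" "p \<noteq> []"
        using P(3) \<open>p \<in> P\<close> unfolding is_path_def by auto
      show "hd p \<in> S" "last p \<notin> S" using P(3) \<open>p \<in> P\<close> assms(2) \<open>v \<in> K\<close> by auto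
    qed
  qed
  then have "card P \<le> card F"
    by (rule card_paths_le_card_blocking_set[OF \<open>finite F\<close> \<open>v \<notin> F\<close> _ P(4)])
  then show False using P(2) assms(4) by linarith
qed

lemma sink_wait_cond_of_sink_view:
  assumes kappa: "kappa_ge (Gdi_edges PD) S (Suc f)"
    and closed: "\<forall>s\<in>S. PD s \<subseteq> S \<union> F"
    and "S \<inter> F = {}" "finite F" "card F \<le> f"
    and sink_pds: "\<forall>s\<in>S. (s, PD s) \<in> pds"
    and authentic: "\<forall>(k, X)\<in>pds. k \<notin> F \<longrightarrow> X = PD k"
    and "S \<subseteq> rc"
  shows "sink_wait_cond f pds kn rc"
proof -
  have leaves_to_F: "\<forall>a\<in>S. \<forall>b. (a, b) \<in> pd_graph pds \<longrightarrow> b \<in> S \<union> F"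
  proof (intro ballI allI impI)
    fix a b assume "a \<in> S" "(a, b) \<in> pd_graph pds"
    then obtain X where "(a, X) \<in> pds" "b \<in> X" unfolding pd_graph_def by blast
    then have "X = PD a" using authentic \<open>a \<in> S\<close> \<open>S \<inter> F = {}\<close> by blast
    then show "b \<in> S \<union> F" using closed \<open>a \<in> S\<close> \<open>b \<in> X\<close> by blast
  qed
  have "Gdi_edges PD \<inter> S \<times> S \<subseteq> pd_graph pds"
    using sink_pds unfolding Gdi_edges_def pd_graph_def by auto
  then have "kappa_ge (pd_graph pds) S (Suc f)" by (rule kappa_ge_mono[OF kappa])
  moreover have "card K \<le> f"
    if "K \<subseteq> (kn \<union> rc) - S" "receives_paths (pd_graph pds) S K (Suc f)" for K
  proof -
    have "K \<inter> S = {}" using that(1) by blast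
    then have "K \<subseteq> F"
      using receives_paths_from_closed_set_subset[OF that(2) _ \<open>finite F\<close> _ leaves_to_F]
        \<open>card F \<le> f\<close> by simp
    then show ?thesis using card_mono[OF \<open>finite F\<close>] \<open>card F \<le> f\<close> le_trans by blast
  qed
  ultimately show ?thesis unfolding sink_wait_cond_def using \<open>S \<subseteq> rc\<close> by blast
qed

locale discovery_execution =
  fixes PD :: "'p \<Rightarrow> 'p set" and F :: "'p set"
    and spd :: "nat \<Rightarrow> 'p \<Rightarrow> 'p spd" and known rcvd :: "nat \<Rightarrow> 'p \<Rightarrow> 'p set"
    and sent dlv :: "nat \<Rightarrow> ('p \<times> 'p \<times> 'p msg) set"
  assumes run: "discovery_run PD F spd known rcvd sent dlv"
begin

lemmas run_clauses = run[unfolded discovery_run_def Let_def]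

lemma initial_state:
  "j \<notin> F \<Longrightarrow> spd 0 j = {(j, PD j)} \<and> known 0 j = PD j \<union> {j} \<and> rcvd 0 j = {j}"
  using run_clauses[THEN conjunct1] by simp

lemma state_step:
  "j \<notin> F \<Longrightarrow>
    spd (Suc t) j = spd t j \<union> (\<Union>(j', pds)\<in>valid_in dlv t j. pds) \<and>
    known (Suc t) j = known t j \<union> (\<Union>(j', pds)\<in>valid_in dlv t j. \<Union>(k, X)\<in>pds. X) \<and>
    rcvd (Suc t) j = rcvd t j \<union> (\<Union>(j', pds)\<in>valid_in dlv t j. fst ` pds)"
  using run_clauses[THEN conjunct2, THEN conjunct1] by simp

lemma sends_GetPDs: "j \<notin> F \<Longrightarrow> w \<in> known t j \<Longrightarrow> \<exists>t'\<ge>t. (j, w, GetPDs) \<in> sent t'"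
  using run_clauses[THEN conjunct2, THEN conjunct2, THEN conjunct1] by blast

lemma answers_GetPDs:
  "j \<notin> F \<Longrightarrow> (w, j, GetPDs) \<in> dlv t \<Longrightarrow> \<exists>t'\<ge>t. (j, w, SetPDs (spd t' j)) \<in> sent t'"
  using run_clauses[THEN conjunct2, THEN conjunct2, THEN conjunct2, THEN conjunct1] by blast

lemma sends_only_protocol_messages:
  "j \<notin> F \<Longrightarrow> (j, w, m) \<in> sent t \<Longrightarrow>
    (m = GetPDs \<and> w \<in> known t j) \<or> (m = SetPDs (spd t j) \<and> (\<exists>t'\<le>t. (w, j, GetPDs) \<in> dlv t'))"
  using run_clauses[THEN conjunct2, THEN conjunct2, THEN conjunct2, THEN conjunct2, THEN conjunct1]
    by blast

lemma sent_SetPDs_is_view: "j \<notin> F \<Longrightarrow> (j, w, SetPDs pds) \<in> sent t \<Longrightarrow> pds = spd t j"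
  using sends_only_protocol_messages[of j w "SetPDs pds" t] by simp

lemma delivered_was_sent: "j \<notin> F \<Longrightarrow> (j, w, m) \<in> dlv t \<Longrightarrow> \<exists>t'\<le>t. (j, w, m) \<in> sent t'"
  using run_clauses[THEN conjunct2, THEN conjunct2, THEN conjunct2, THEN conjunct2, THEN conjunct2,
      THEN conjunct1]
    by blast

lemma byzantine_cannot_forge:
  "b \<in> F \<Longrightarrow> j \<notin> F \<Longrightarrow> (b, j, SetPDs pds) \<in> dlv t \<Longrightarrow> (k, X) \<in> pds \<Longrightarrow> k \<notin> F \<Longrightarrow> X = PD k"
  using run_clauses[THEN conjunct2, THEN conjunct2, THEN conjunct2, THEN conjunct2, THEN conjunct2,
      THEN conjunct2, THEN conjunct1]
    by blast

lemma eventually_delivered: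
  "j \<notin> F \<Longrightarrow> w \<notin> F \<Longrightarrow> (j, w, m) \<in> sent t \<Longrightarrow> \<exists>t'\<ge>t. (j, w, m) \<in> dlv t'"
  using run_clauses[THEN conjunct2, THEN conjunct2, THEN conjunct2, THEN conjunct2, THEN conjunct2,
      THEN conjunct2, THEN conjunct2]
    by blast

lemma spd_mono: "t \<le> t' \<Longrightarrow> j \<notin> F \<Longrightarrow> spd t j \<subseteq> spd t' j"
  using lift_Suc_mono_le[of "\<lambda>t. spd t j"] state_step by blast

lemma known_mono: "t \<le> t' \<Longrightarrow> j \<notin> F \<Longrightarrow> known t j \<subseteq> known t' j"
  using lift_Suc_mono_le[of "\<lambda>t. known t j"] state_step by blast

lemma own_pd_in_spd: "j \<notin> F \<Longrightarrow> (j, PD j) \<in> spd t j"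
  using spd_mono[of 0 t j] initial_state by auto

lemma signers_in_rcvd: "j \<notin> F \<Longrightarrow> fst ` spd t j \<subseteq> rcvd t j"
  by (induction t) (use initial_state state_step in auto)

lemma correct_entries_authentic:
  "j \<notin> F \<Longrightarrow> (k, X) \<in> spd t j \<Longrightarrow> k \<notin> F \<Longrightarrow> X = PD k"
proof (induction t arbitrary: j k X rule: less_induct)
  case (less t)
  show ?case
  proof (cases t)
    case 0
    then show ?thesis using less.prems initial_state by auto
  next
    case (Suc t0)
    then consider "(k, X) \<in> spd t0 j"
      | j' pds where "(j', j, SetPDs pds) \<in> dlv t0" "(k, X) \<in> pds"
      using less.prems state_step[of j t0] unfolding valid_in_def by auto
    then show ?thesis
    proof cases
      case 1
      then show ?thesis using less.IH[of t0] less.prems Suc by simp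
    next
      case (2 j' pds)
      show ?thesis
      proof (cases "j' \<in> F")
        case True
        then show ?thesis using byzantine_cannot_forge 2 less.prems by blast
      next
        case False
        then obtain t1 where "t1 \<le> t0" "(j', j, SetPDs pds) \<in> sent t1"
          using delivered_was_sent 2 by blast
        then have "pds = spd t1 j'" "t1 < t" using sent_SetPDs_is_view False Suc by auto
        then show ?thesis using less.IH[of t1 j' k X] less.prems 2 False by simp
      qed
    qed
  qed
qed

lemma view_forwarded_along_pd:
  assumes "u \<notin> F" "w \<notin> F" "w \<in> PD u"
  shows "\<exists>T'. spd T w \<subseteq> spd T' u"
proof -
  have "w \<in> known T u" using known_mono[of 0 T u] initial_state assms by auto
  then obtain t1 where "t1 \<ge> T" "(u, w, GetPDs) \<in> sent t1"
    using sends_GetPDs assms(1) by blast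
  then obtain t2 where "t2 \<ge> t1" "(u, w, GetPDs) \<in> dlv t2"
    using eventually_delivered assms(1,2) by blast
  then obtain t3 where "t3 \<ge> t2" "(w, u, SetPDs (spd t3 w)) \<in> sent t3"
    using answers_GetPDs assms(2) by blast
  then obtain t4 where t4: "(w, u, SetPDs (spd t3 w)) \<in> dlv t4"
    using eventually_delivered assms(1,2) by blast
  have "(w, spd t3 w) \<in> valid_in dlv t4 u"
    unfolding valid_in_def using t4 own_pd_in_spd assms(2) by auto
  then have "spd t3 w \<subseteq> spd (Suc t4) u" using state_step assms(1) by blast
  moreover have "spd T w \<subseteq> spd t3 w"
    using spd_mono[of T t3 w] \<open>t1 \<ge> T\<close> \<open>t2 \<ge> t1\<close> \<open>t3 \<ge> t2\<close> assms(2) by simp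
  ultimately show ?thesis by blast
qed

lemma reachable_pd_eventually_in_spd:
  assumes "(u, w) \<in> reach (Gdi_edges PD) (- F)" "u \<notin> F"
  shows "\<exists>T. (w, PD w) \<in> spd T u"
  using assms unfolding reach_def
proof (induction rule: converse_rtrancl_induct)
  case base
  then show ?case using own_pd_in_spd by blast
next
  case (step u v)
  then have "v \<notin> F" "v \<in> PD u" by (auto simp: Gdi_edges_def)
  then obtain T where "(w, PD w) \<in> spd T v" using step by blast
  then show ?case using view_forwarded_along_pd step(4) \<open>v \<notin> F\<close> \<open>v \<in> PD u\<close> by blast
qed

lemma reachable_pds_eventually_in_spd:
  assumes "finite W" "\<forall>w\<in>W. (u, w) \<in> reach (Gdi_edges PD) (- F)" "u \<notin> F"
  shows "\<exists>T. \<forall>w\<in>W. (w, PD w) \<in> spd T u"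
proof -
  obtain Tw where Tw: "\<And>w. w \<in> W \<Longrightarrow> (w, PD w) \<in> spd (Tw w) u"
    using reachable_pd_eventually_in_spd assms(2,3) by metis
  have "(w, PD w) \<in> spd (Max (Tw ` W)) u" if "w \<in> W" for w
    using spd_mono[of "Tw w" "Max (Tw ` W)" u] Tw that assms(1,3) by auto
  then show ?thesis by blast
qed

end

theorem theorem4:
  fixes PD :: "'p::finite \<Rightarrow> 'p set"
    and F :: "'p set"
    and f :: nat
    and spd :: "nat \<Rightarrow> 'p \<Rightarrow> 'p spd"
    and known rcvd :: "nat \<Rightarrow> 'p \<Rightarrow> 'p set"
    and sent dlv :: "nat \<Rightarrow> ('p \<times> 'p \<times> 'p msg) set"
  assumes "card F \<le> f"
    and "in_Gdi_class PD (- F) f"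
    and "discovery_run PD F spd known rcvd sent dlv"
    and "i \<in> - F"
  shows "\<exists>t. sink_wait_cond f (spd t i) (known t i) (rcvd t i)"
proof -
  interpret discovery_execution PD F spd known rcvd sent dlv
    using assms(3) by unfold_locales
  obtain S where S: "OSR_with_sink (Suc f) (Gdi_edges PD) (- F) S"
    using assms(2) unfolding in_Gdi_class_def by blast
  then have sink: "is_sink_comp (Gdi_edges PD) (- F) S"
    and kappa: "kappa_ge (Gdi_edges PD) S (Suc f)"
    unfolding OSR_with_sink_def by blast+
  have "S \<subseteq> - F" using sink unfolding is_sink_comp_def is_scc_def by blast
  have closed: "\<forall>s\<in>S. PD s \<subseteq> S \<union> F"
    using sink unfolding is_sink_comp_def Gdi_edges_def by auto
  have "\<forall>s\<in>S. (i, s) \<in> reach (Gdi_edges PD) (- F)"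
    using reach_sink_of_OSR[OF S assms(4)] by blast
  then obtain T where sink_pds: "\<forall>s\<in>S. (s, PD s) \<in> spd T i"
    using reachable_pds_eventually_in_spd[of S i] assms(4) by auto
  have "S \<subseteq> rcvd T i" using sink_pds signers_in_rcvd assms(4) by force
  moreover have "\<forall>(k, X)\<in>spd T i. k \<notin> F \<longrightarrow> X = PD k"
    using correct_entries_authentic assms(4) by blast
  moreover have "S \<inter> F = {}" using \<open>S \<subseteq> - F\<close> by blast
  ultimately have "sink_wait_cond f (spd T i) (known T i) (rcvd T i)"
    using sink_wait_cond_of_sink_view[OF kappa closed] assms(1) sink_pds by simp
  then show ?thesis by blast
qed

end
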